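(* Let $\mathcal L$ be a finite distributive lattice, $\mathcal I$ a poset ideal and $\mathcal J$ a poset coideal of $\mathcal L$ with $\mathcal I\cup\mathcal J=\mathcal L$ and $\mathcal I\cap\mathcal J=\emptyset$. Then the ideal $H_{\mathcal I}\cap H_{\mathcal J}$ is generated by the monomials $\mathrm{lcm}(u_p,u_q)$ with $p\in\mathcal J$, $q\in\mathcal I$ and $q$ a lower neighbor of $p$. In particular, all minimal generators of $H_{\mathcal I}\cap H_{\mathcal J}$ have degree $\operatorname{rank}\mathcal L+1$.
   Context: Let $P$ be the set of join-irreducible elements of $\mathcal L$ (elements with exactly one lower neighbor); for $p\in\mathcal L$ put $\ell(p)=\{q\in P:q\le p\}$. Let $K$ be a field, $S=K[x_p,y_p:p\in P]$ (all variables of degree 1), $u_q=\prod_{p\in\ell(q)}x_p\prod_{p\in P\setminus\ell(q)}y_p$ for $q\in\mathcal L$, and for $\mathcal S\subseteq\mathcal L$ let $H_{\mathcal S}=(u_q:q\in\mathcal S)$. Poset ideals are closed downward, poset coideals upward. $\operatorname{rank}\mathcal L$ is the common length of the maximal chains of $\mathcal L$. *)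

theory Defs
  imports Main "HOL-Library.Poly_Mapping"
begin

definition lower_nb :: "'a::order \<Rightarrow> 'a \<Rightarrow> bool" where
  "lower_nb q p \<longleftrightarrow> q < p \<and> \<not> (\<exists>z. q < z \<and> z < p)"

definition join_irr :: "'a::order set" where
  "join_irr = {p. card {q. lower_nb q p} = 1}"

definition poset_ideal :: "'a::order set \<Rightarrow> bool" where
  "poset_ideal I \<longleftrightarrow> (\<forall>x\<in>I. \<forall>y. y \<le> x \<longrightarrow> y \<in> I)"

definition poset_coideal :: "'a::order set \<Rightarrow> bool" where
  "poset_coideal J \<longleftrightarrow> (\<forall>x\<in>J. \<forall>y. x \<le> y \<longrightarrow> y \<in> J)"

definition is_chain :: "'a::order set \<Rightarrow> bool" where
  "is_chain C \<longleftrightarrow> (\<forall>x\<in>C. \<forall>y\<in>C. x \<le> y \<or> y \<le> x)"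

(* rank of a finite lattice: length (number of covering steps) of a longest chain;
   in a finite distributive lattice all maximal chains have this length *)
definition lat_rank :: "'a::{finite,order} itself \<Rightarrow> nat" where
  "lat_rank _ = Max {card C | C :: 'a set. is_chain C} - 1"

(* variables of S: Inl p = x_p, Inr p = y_p.  Monomials are exponent vectors
   ('a + 'a) \<Rightarrow>\<^sub>0 nat, polynomials are  (('a + 'a) \<Rightarrow>\<^sub>0 nat) \<Rightarrow>\<^sub>0 'k *)

definition ell :: "'a::order \<Rightarrow> 'a set" where
  "ell p = {q \<in> join_irr. q \<le> p}"

definition u_exp :: "'a::{finite,order} \<Rightarrow> ('a + 'a) \<Rightarrow>\<^sub>0 nat" where
  "u_exp q = Abs_poly_mapping (\<lambda>v. case v of
      Inl p \<Rightarrow> (if p \<in> ell q then 1 else 0)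
    | Inr p \<Rightarrow> (if p \<in> join_irr - ell q then 1 else 0))"

definition u_mon :: "'a::{finite,order} \<Rightarrow> (('a + 'a) \<Rightarrow>\<^sub>0 nat) \<Rightarrow>\<^sub>0 'k::field" where
  "u_mon q = Poly_Mapping.single (u_exp q) 1"

definition exp_lcm :: "('v \<Rightarrow>\<^sub>0 nat) \<Rightarrow> ('v \<Rightarrow>\<^sub>0 nat) \<Rightarrow> ('v \<Rightarrow>\<^sub>0 nat)" where
  "exp_lcm a b = Abs_poly_mapping (\<lambda>v. max (Poly_Mapping.lookup a v) (Poly_Mapping.lookup b v))"

definition ideal_gen :: "'r::comm_ring_1 set \<Rightarrow> 'r set" where
  "ideal_gen G = {x. \<exists>A f. finite A \<and> A \<subseteq> G \<and> x = (\<Sum>g\<in>A. f g * g)}"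

definition H :: "'a::{finite,order} set \<Rightarrow> ((('a + 'a) \<Rightarrow>\<^sub>0 nat) \<Rightarrow>\<^sub>0 'k::field) set" where
  "H S = ideal_gen (u_mon ` S)"

definition exp_dvd :: "('v \<Rightarrow>\<^sub>0 nat) \<Rightarrow> ('v \<Rightarrow>\<^sub>0 nat) \<Rightarrow> bool" where
  "exp_dvd a b \<longleftrightarrow> (\<forall>v. Poly_Mapping.lookup a v \<le> Poly_Mapping.lookup b v)"

definition min_mon_gens :: "(('v \<Rightarrow>\<^sub>0 nat) \<Rightarrow>\<^sub>0 'k::field) set \<Rightarrow> ('v \<Rightarrow>\<^sub>0 nat) set" where
  "min_mon_gens M = {e. Poly_Mapping.single e 1 \<in> M \<and>
      \<not> (\<exists>e'. e' \<noteq> e \<and> exp_dvd e' e \<and> Poly_Mapping.single e' 1 \<in> M)}"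

definition mon_deg :: "('v \<Rightarrow>\<^sub>0 nat) \<Rightarrow> nat" where
  "mon_deg e = (\<Sum>v\<in>Poly_Mapping.keys e. Poly_Mapping.lookup e v)"

end

theory Submission
  imports Defs "HOL.Modules"
begin

(* Encode lcm(u_p, u_q) by the supports of its x- and y-parts, l(p) Un l(q) and
   P - (l(p) Int l(q)); one such monomial divides another iff the first support grows and
   the second shrinks.  H_I Int H_J is generated by all lcm(u_p0, u_q0) with p0 in J and
   q0 in I.  Walking up from p0 inf q0 (in I) to p0 (in J) one crosses a lower neighbour
   q in I of some p in J, and l(p0) Int l(q0) = l(p0 inf q0) <= l(q) <= l(p) <= l(p0),
   so lcm(u_p, u_q) divides lcm(u_p0, u_q0).  In a distributive lattice join-irreducibles
   are join-prime, hence passing to an upper neighbour adds exactly one join-irreducible,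
   l(p) = insert r l(q); so lcm(u_p, u_q) has degree |P| + 1.  Finally |P| is the rank,
   because l strictly increases along chains and below every x there is a chain of
   |l(x)| + 1 elements. *)

unbundle lattice_syntax

subsection \<open>Covers and join-irreducible elements\<close>

lemma lower_nb_less: "lower_nb q p \<Longrightarrow> q < p"
  unfolding lower_nb_def by simp

lemma ex_lower_nb_above:
  fixes x r :: "'a::{finite,order}"
  assumes "x < r"
  shows "\<exists>c. x \<le> c \<and> lower_nb c r"
proof -
  obtain c where c: "x \<le> c" "c < r" and maximal: "\<And>z. x \<le> z \<Longrightarrow> z < r \<Longrightarrow> c \<le> z \<Longrightarrow> c = z"
    using finite_has_maximal[of "{z. x \<le> z \<and> z < r}"] assms by auto
  have "lower_nb c r"
    unfolding lower_nb_def using c maximal by (metis order.strict_iff_not order.trans)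
  with c show ?thesis by blast
qed

lemma ex_lower_nb_across:
  fixes a b :: "'a::{finite,order}"
  assumes "a \<le> b" "a \<notin> J" "b \<in> J"
  shows "\<exists>p q. p \<in> J \<and> q \<notin> J \<and> lower_nb q p \<and> a \<le> q \<and> p \<le> b"
proof -
  obtain p where p: "p \<in> J" "a \<le> p" "p \<le> b"
    and minimal: "\<And>z. z \<in> J \<Longrightarrow> a \<le> z \<Longrightarrow> z \<le> p \<Longrightarrow> z = p"
    using finite_has_minimal[of "{z \<in> J. a \<le> z \<and> z \<le> b}"] assms by (auto intro: order.trans)
  have "a < p"
    using p assms(2) by (auto simp: le_less)
  then obtain q where q: "a \<le> q" "lower_nb q p"
    using ex_lower_nb_above by blast
  have "q \<notin> J"
    using minimal[of q] q lower_nb_less[OF q(2)] by (auto simp: less_le)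
  with p q show ?thesis by blast
qed

lemma join_irr_iff: "p \<in> join_irr \<longleftrightarrow> (\<exists>c. {q. lower_nb q p} = {c})"
  unfolding join_irr_def by (simp add: card_1_singleton_iff)

lemma join_irr_less_imp_le_lower_nb:
  fixes r :: "'a::{finite,order}"
  assumes "r \<in> join_irr" "lower_nb c r" "x < r"
  shows "x \<le> c"
proof -
  obtain c' where "x \<le> c'" "lower_nb c' r"
    using ex_lower_nb_above[OF assms(3)] by blast
  moreover have "c' = c"
    using assms(1,2) \<open>lower_nb c' r\<close> unfolding join_irr_iff by (metis mem_Collect_eq singletonD)
  ultimately show ?thesis by simp
qed

lemma join_irr_le_sup:
  fixes r :: "'a::{finite,distrib_lattice}"
  assumes "r \<in> join_irr" "r \<le> a \<squnion> b"
  shows "r \<le> a \<or> r \<le> b"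
proof (rule ccontr)
  assume "\<not> (r \<le> a \<or> r \<le> b)"
  then have "r \<sqinter> a < r" "r \<sqinter> b < r"
    by (metis inf_le1 inf.absorb_iff1 order.not_eq_order_implies_strict)+
  obtain c where c: "lower_nb c r"
    using assms(1) unfolding join_irr_iff by blast
  have "(r \<sqinter> a) \<squnion> (r \<sqinter> b) \<le> c"
    using join_irr_less_imp_le_lower_nb[OF assms(1) c] \<open>r \<sqinter> a < r\<close> \<open>r \<sqinter> b < r\<close> by simp
  moreover have "(r \<sqinter> a) \<squnion> (r \<sqinter> b) = r"
    using assms(2) by (simp add: inf_sup_distrib1[symmetric] inf_absorb1)
  ultimately show False
    using lower_nb_less[OF c] by simp
qed

lemma sup_eq_of_lower_nb:
  fixes p q x :: "'a::lattice"
  assumes "lower_nb q p" "x \<le> p" "\<not> x \<le> q"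
  shows "q \<squnion> x = p"
proof -
  have "q < q \<squnion> x"
    using assms(3) by (simp add: less_le_not_le)
  moreover have "q \<squnion> x \<le> p"
    using assms(2) lower_nb_less[OF assms(1)] by simp
  ultimately show ?thesis
    using assms(1) unfolding lower_nb_def by (auto simp: le_less)
qed

lemma ex_join_irr_le_not_le:
  fixes a b :: "'a::{finite,lattice}"
  assumes "\<not> b \<le> a"
  shows "\<exists>r\<in>join_irr. r \<le> b \<and> \<not> r \<le> a"
proof -
  obtain r where r: "r \<le> b" "\<not> r \<le> a"
    and minimal: "\<And>z. z \<le> b \<Longrightarrow> \<not> z \<le> a \<Longrightarrow> z \<le> r \<Longrightarrow> z = r"
    using finite_has_minimal[of "{z. z \<le> b \<and> \<not> z \<le> a}"] assms by auto
  have below: "z \<le> a" if "z < r" for z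
    using minimal[of z] r(1) that by (metis less_imp_le order.trans less_irrefl)
  have "r \<sqinter> a < r"
    using r(2) by (metis inf_le1 inf.absorb_iff1 order.not_eq_order_implies_strict)
  then obtain c where c: "lower_nb c r"
    using ex_lower_nb_above by blast
  have "d = c" if d: "lower_nb d r" for d
  proof (rule ccontr)
    assume "d \<noteq> c"
    then have "\<not> d \<le> c"
      using d lower_nb_less[OF c] unfolding lower_nb_def by (auto simp: le_less)
    then have "c \<squnion> d = r"
      using sup_eq_of_lower_nb[OF c] lower_nb_less[OF d] by simp
    moreover have "c \<squnion> d \<le> a"
      using below lower_nb_less[OF c] lower_nb_less[OF d] by simp
    ultimately show False
      using r(2) by simp
  qed
  then have "r \<in> join_irr"
    using c unfolding join_irr_iff by blast
  with r show ?thesis by blast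
qed

lemma ell_mono: "a \<le> b \<Longrightarrow> ell a \<subseteq> ell b"
  unfolding ell_def by auto

lemma ell_inf: "ell (a \<sqinter> b) = ell a \<inter> ell (b :: 'a::lattice)"
  unfolding ell_def by auto

lemma ell_subset_join_irr: "ell a \<subseteq> join_irr"
  unfolding ell_def by auto

lemma ell_strict_mono:
  fixes a b :: "'a::{finite,lattice}"
  assumes "a < b"
  shows "ell a \<subset> ell b"
proof -
  obtain r where "r \<in> join_irr" "r \<le> b" "\<not> r \<le> a"
    using ex_join_irr_le_not_le assms by (metis less_le_not_le)
  then have "r \<in> ell b - ell a"
    unfolding ell_def by simp
  with ell_mono[OF less_imp_le[OF assms]] show ?thesis by auto
qed

lemma ell_lower_nb:
  fixes p q :: "'a::{finite,distrib_lattice}"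
  assumes "lower_nb q p"
  shows "\<exists>r. r \<notin> ell q \<and> ell p = insert r (ell q)"
proof -
  obtain r where r: "r \<in> ell p" "r \<notin> ell q"
    using ell_strict_mono[OF lower_nb_less[OF assms]] by blast
  have "s = r" if s: "s \<in> ell p" "s \<notin> ell q" for s
  proof -
    have ji: "s \<in> join_irr" "r \<in> join_irr" "\<not> s \<le> q" "\<not> r \<le> q"
      using r s unfolding ell_def by auto
    have "s \<le> q \<squnion> r" "r \<le> q \<squnion> s"
      using sup_eq_of_lower_nb[OF assms] r s ji unfolding ell_def by simp_all
    then show ?thesis
      using join_irr_le_sup ji by (meson order.antisym)
  qed
  moreover have "ell q \<subseteq> ell p"
    using ell_mono[OF less_imp_le[OF lower_nb_less[OF assms]]] .
  ultimately show ?thesis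
    using r by blast
qed

lemma card_ell_lower_nb:
  fixes p q :: "'a::{finite,distrib_lattice}"
  assumes "lower_nb q p"
  shows "card (ell p) = Suc (card (ell q))"
  using ell_lower_nb[OF assms] by auto

subsection \<open>The rank of a finite distributive lattice\<close>

lemma card_chain_le:
  fixes C :: "'a::{finite,lattice} set"
  assumes "is_chain C"
  shows "card C \<le> Suc (card (join_irr :: 'a set))"
proof -
  have "inj_on (\<lambda>c. card (ell c)) C"
  proof (rule inj_onI)
    fix c d assume "c \<in> C" "d \<in> C" "card (ell c) = card (ell d)"
    moreover have "card (ell c) < card (ell d)" if "c < d" for c d :: 'a
      using ell_strict_mono[OF that] by (simp add: psubset_card_mono)
    ultimately show "c = d"
      using assms unfolding is_chain_def by (metis order.order_iff_strict less_irrefl)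
  qed
  moreover have "(\<lambda>c. card (ell c)) ` C \<subseteq> {..card (join_irr :: 'a set)}"
    using ell_subset_join_irr by (auto intro!: card_mono)
  ultimately have "card C \<le> card {..card (join_irr :: 'a set)}"
    by (metis card_image card_mono finite_atMost)
  then show ?thesis by simp
qed

lemma ex_chain_below:
  fixes x :: "'a::{finite,distrib_lattice}"
  shows "\<exists>C. is_chain C \<and> card C = Suc (card (ell x)) \<and> (\<forall>c\<in>C. c \<le> x)"
proof (induction "card (ell x)" arbitrary: x)
  case 0
  show ?case
    by (rule exI[of _ "{x}"]) (simp add: is_chain_def flip: 0)
next
  case (Suc n)
  obtain r where r: "r \<in> ell x"
    using Suc(2) by (metis card.empty ex_in_conv nat.distinct(1))
  then obtain c where "lower_nb c r"
    unfolding ell_def join_irr_iff by blast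
  then have "c < x"
    using r lower_nb_less unfolding ell_def by (blast intro: order.strict_trans2)
  then obtain y where y: "lower_nb y x"
    using ex_lower_nb_above by blast
  then have "n = card (ell y)"
    using Suc(2) card_ell_lower_nb[OF y] by simp
  then obtain C where C: "is_chain C" "card C = Suc n" "\<forall>c\<in>C. c \<le> y"
    using Suc(1) by blast
  have below_x: "\<forall>c\<in>insert x C. c \<le> x"
    using C(3) lower_nb_less[OF y] by force
  moreover have "x \<notin> C"
    using C(3) lower_nb_less[OF y] by force
  then have "card (insert x C) = Suc (card (ell x))"
    using C(2) Suc(2) by simp
  moreover have "is_chain (insert x C)"
    using C(1) below_x unfolding is_chain_def by blast
  ultimately show ?case by blast
qed

lemma lat_rank_eq_card_join_irr:
  "lat_rank TYPE('a::{finite,distrib_lattice}) = card (join_irr :: 'a set)"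
proof -
  let ?lengths = "{card C |C :: 'a set. is_chain C}"
  have "ell (Sup_fin UNIV :: 'a) = join_irr"
    unfolding ell_def by (auto intro: Sup_fin.coboundedI)
  then have "Suc (card (join_irr :: 'a set)) \<in> ?lengths"
    using ex_chain_below[of "Sup_fin UNIV :: 'a"] by (metis (mono_tags, lifting) mem_Collect_eq)
  moreover have "finite ?lengths"
    using finite_image_set[of "\<lambda>C :: 'a set. is_chain C" card] by simp
  ultimately have "Max ?lengths = Suc (card (join_irr :: 'a set))"
    using card_chain_le by (intro Max_eqI) auto
  then show ?thesis
    unfolding lat_rank_def by simp
qed

subsection \<open>Monomial ideals\<close>

lemma exp_dvd_refl: "exp_dvd e e"
  unfolding exp_dvd_def by simp

lemma exp_dvd_trans: "exp_dvd a b \<Longrightarrow> exp_dvd b c \<Longrightarrow> exp_dvd a c"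
  unfolding exp_dvd_def by (meson order.trans)

lemma exp_dvd_add_left: "exp_dvd e (a + e)"
  unfolding exp_dvd_def by (simp add: lookup_add)

lemma exp_dvd_diff_add: "exp_dvd g m \<Longrightarrow> (m - g) + g = m"
  unfolding exp_dvd_def by (intro poly_mapping_eqI) (simp add: lookup_add lookup_minus)

lemma lookup_exp_lcm:
  "Poly_Mapping.lookup (exp_lcm a b) v = max (Poly_Mapping.lookup a v) (Poly_Mapping.lookup b v)"
proof -
  have "{v. max (Poly_Mapping.lookup a v) (Poly_Mapping.lookup b v) \<noteq> 0}
      \<subseteq> Poly_Mapping.keys a \<union> Poly_Mapping.keys b"
    by (auto simp: in_keys_iff)
  then have "finite {v. max (Poly_Mapping.lookup a v) (Poly_Mapping.lookup b v) \<noteq> 0}"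
    by (rule finite_subset) simp
  then show ?thesis
    unfolding exp_lcm_def by simp
qed

lemma exp_lcm_commute: "exp_lcm a b = exp_lcm b a"
  by (rule poly_mapping_eqI) (simp add: lookup_exp_lcm max.commute)

lemma exp_dvd_lcm_iff: "exp_dvd (exp_lcm a b) m \<longleftrightarrow> exp_dvd a m \<and> exp_dvd b m"
  unfolding exp_dvd_def lookup_exp_lcm by auto

lemma module_times: "module ((*) :: 'r::comm_ring_1 \<Rightarrow> 'r \<Rightarrow> 'r)"
  by unfold_locales (simp_all add: algebra_simps)

lemma ideal_gen_eq_span: "ideal_gen G = module.span (*) G"
  unfolding ideal_gen_def module.span_explicit[OF module_times] by blast

definition monomial_ideal :: "('v \<Rightarrow>\<^sub>0 nat) set \<Rightarrow> (('v \<Rightarrow>\<^sub>0 nat) \<Rightarrow>\<^sub>0 'k::comm_ring_1) set" where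
  "monomial_ideal G = {f. \<forall>m\<in>Poly_Mapping.keys f. \<exists>g\<in>G. exp_dvd g m}"

lemma sum_single_lookup:
  "(\<Sum>m\<in>Poly_Mapping.keys f. Poly_Mapping.single m (Poly_Mapping.lookup f m)) = f"
  by (rule poly_mapping_eqI)
    (simp add: lookup_sum lookup_single when_def in_keys_iff sum.delta[OF finite_keys])

lemma subspace_monomial_ideal:
  "module.subspace (*) (monomial_ideal G :: (_ \<Rightarrow>\<^sub>0 'k::comm_ring_1) set)"
proof -
  have "0 \<in> monomial_ideal G"
    by (simp add: monomial_ideal_def)
  moreover have "f + h \<in> monomial_ideal G" if "f \<in> monomial_ideal G" "h \<in> monomial_ideal G" for f h
    using that keys_add[of f h] unfolding monomial_ideal_def by blast
  moreover have "c * f \<in> monomial_ideal G" if f: "f \<in> monomial_ideal G" for c f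
    unfolding monomial_ideal_def
  proof (intro CollectI ballI)
    fix m assume "m \<in> Poly_Mapping.keys (c * f)"
    then obtain a e where "m = a + e" "e \<in> Poly_Mapping.keys f" using keys_mult by blast
    with f show "\<exists>g\<in>G. exp_dvd g m"
      unfolding monomial_ideal_def using exp_dvd_trans exp_dvd_add_left by blast
  qed
  ultimately show ?thesis
    unfolding module.subspace_def[OF module_times] by blast
qed

lemma ideal_gen_monomials:
  "ideal_gen ((\<lambda>e. Poly_Mapping.single e 1) ` G) = (monomial_ideal G :: (('v \<Rightarrow>\<^sub>0 nat) \<Rightarrow>\<^sub>0 'k::comm_ring_1) set)"
  unfolding ideal_gen_eq_span
proof
  show "module.span (*) ((\<lambda>e. Poly_Mapping.single e 1) ` G) \<subseteq> (monomial_ideal G :: (_ \<Rightarrow>\<^sub>0 'k) set)"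
  proof (rule module.span_minimal[OF module_times _ subspace_monomial_ideal])
    show "(\<lambda>e. Poly_Mapping.single e 1) ` G \<subseteq> (monomial_ideal G :: (_ \<Rightarrow>\<^sub>0 'k) set)"
      unfolding monomial_ideal_def by (auto intro: exp_dvd_refl)
  qed
next
  show "monomial_ideal G \<subseteq> module.span (*) ((\<lambda>e. Poly_Mapping.single e (1::'k)) ` G)"
  proof
    fix f :: "('v \<Rightarrow>\<^sub>0 nat) \<Rightarrow>\<^sub>0 'k" assume "f \<in> monomial_ideal G"
    then have "\<forall>m\<in>Poly_Mapping.keys f. \<exists>g. g \<in> G \<and> exp_dvd g m"
      unfolding monomial_ideal_def by blast
    then obtain g where g: "\<forall>m\<in>Poly_Mapping.keys f. g m \<in> G \<and> exp_dvd (g m) m"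
      by (rule bchoice[elim_format]) blast
    have "f = (\<Sum>m\<in>Poly_Mapping.keys f. Poly_Mapping.single m (Poly_Mapping.lookup f m))"
      by (simp add: sum_single_lookup)
    also have "\<dots> = (\<Sum>m\<in>Poly_Mapping.keys f. Poly_Mapping.single (m - g m) (Poly_Mapping.lookup f m) * Poly_Mapping.single (g m) 1)"
      using g by (intro sum.cong refl) (simp add: mult_single exp_dvd_diff_add)
    also have "\<dots> \<in> module.span (*) ((\<lambda>e. Poly_Mapping.single e 1) ` G)"
      using g by (intro module.span_sum[OF module_times] module.span_scale[OF module_times]
          module.span_base[OF module_times]) simp
    finally show "f \<in> module.span (*) ((\<lambda>e. Poly_Mapping.single e 1) ` G)" .
  qed
qed

lemma monomial_ideal_subset:
  assumes "\<And>a. a \<in> A \<Longrightarrow> \<exists>b\<in>B. exp_dvd b a"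
  shows "monomial_ideal A \<subseteq> monomial_ideal B"
  unfolding monomial_ideal_def using assms exp_dvd_trans by blast

lemma monomial_ideal_Int:
  "monomial_ideal A \<inter> monomial_ideal B = monomial_ideal {exp_lcm a b | a b. a \<in> A \<and> b \<in> B}"
proof -
  have lcm_dvd: "(\<exists>a\<in>A. exp_dvd a m) \<and> (\<exists>b\<in>B. exp_dvd b m)
      \<longleftrightarrow> (\<exists>g\<in>{exp_lcm a b | a b. a \<in> A \<and> b \<in> B}. exp_dvd g m)" for m
    using exp_dvd_lcm_iff by blast
  have "monomial_ideal A \<inter> monomial_ideal B
      = {f. \<forall>m\<in>Poly_Mapping.keys f. (\<exists>a\<in>A. exp_dvd a m) \<and> (\<exists>b\<in>B. exp_dvd b m)}"
    unfolding monomial_ideal_def by auto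
  then show ?thesis
    unfolding lcm_dvd monomial_ideal_def .
qed

lemma min_mon_gens_monomial_ideal:
  "min_mon_gens (monomial_ideal G :: (_ \<Rightarrow>\<^sub>0 'k::field) set) \<subseteq> G"
proof
  fix e assume e: "e \<in> min_mon_gens (monomial_ideal G :: (_ \<Rightarrow>\<^sub>0 'k) set)"
  then obtain g where "g \<in> G" "exp_dvd g e"
    unfolding min_mon_gens_def monomial_ideal_def by auto
  moreover have "Poly_Mapping.single g (1::'k) \<in> monomial_ideal G"
    using \<open>g \<in> G\<close> exp_dvd_refl unfolding monomial_ideal_def by auto
  ultimately have "g = e"
    using e unfolding min_mon_gens_def by blast
  with \<open>g \<in> G\<close> show "e \<in> G" by simp
qed

subsection \<open>The monomials u_q\<close>

lemma lookup_u_exp: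
  "Poly_Mapping.lookup (u_exp q) v = (case v of Inl p \<Rightarrow> (if p \<in> ell q then 1 else 0)
      | Inr p \<Rightarrow> (if p \<in> join_irr - ell q then 1 else 0))"
  unfolding u_exp_def by (rule fun_cong[OF lookup_Abs_poly_mapping]) simp

lemma lookup_exp_lcm_u_exp:
  "Poly_Mapping.lookup (exp_lcm (u_exp p) (u_exp q)) v = (case v of
      Inl r \<Rightarrow> of_bool (r \<in> ell p \<union> ell q)
    | Inr r \<Rightarrow> of_bool (r \<in> join_irr - ell p \<inter> ell q))"
  unfolding lookup_exp_lcm lookup_u_exp by (cases v) auto

lemma exp_dvd_lcm_u_exp:
  assumes "ell p \<union> ell q \<subseteq> ell p' \<union> ell q'" "ell p' \<inter> ell q' \<subseteq> ell p \<inter> ell q"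
  shows "exp_dvd (exp_lcm (u_exp p) (u_exp q)) (exp_lcm (u_exp p') (u_exp q'))"
  unfolding exp_dvd_def lookup_exp_lcm_u_exp using assms by (auto split: sum.split)

lemma mon_deg_eq_sum_UNIV: "mon_deg (e :: 'v::finite \<Rightarrow>\<^sub>0 nat) = (\<Sum>v\<in>UNIV. Poly_Mapping.lookup e v)"
  unfolding mon_deg_def by (rule sum.mono_neutral_left) (auto simp: in_keys_iff)

lemma mon_deg_lcm_u_exp:
  "mon_deg (exp_lcm (u_exp p) (u_exp q))
     = card (ell p \<union> ell q) + card (join_irr - ell p \<inter> ell (q :: 'a::{finite,order}))"
proof -
  let ?e = "exp_lcm (u_exp p) (u_exp q)"
  have "mon_deg ?e = (\<Sum>r\<in>UNIV. Poly_Mapping.lookup ?e (Inl r)) + (\<Sum>r\<in>UNIV. Poly_Mapping.lookup ?e (Inr r))"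
    unfolding mon_deg_eq_sum_UNIV by (subst UNIV_Plus_UNIV[symmetric], subst sum.Plus) (auto simp: comp_def)
  moreover have "(\<Sum>r\<in>UNIV. of_bool (r \<in> A)) = card A" for A :: "'a set"
    by simp
  ultimately show ?thesis
    by (simp only: lookup_exp_lcm_u_exp sum.case)
qed

lemma mon_deg_lcm_u_exp_lower_nb:
  fixes p q :: "'a::{finite,distrib_lattice}"
  assumes "lower_nb q p"
  shows "mon_deg (exp_lcm (u_exp p) (u_exp q)) = card (join_irr :: 'a set) + 1"
proof -
  have "ell q \<subseteq> ell p"
    using ell_mono[OF less_imp_le[OF lower_nb_less[OF assms]]] .
  then have "mon_deg (exp_lcm (u_exp p) (u_exp q)) = card (ell p) + (card (join_irr :: 'a set) - card (ell q))"
    by (simp add: mon_deg_lcm_u_exp Int_absorb1 Un_absorb2 card_Diff_subset[OF finite ell_subset_join_irr])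
  then show ?thesis
    using card_ell_lower_nb[OF assms] card_mono[OF finite ell_subset_join_irr, of q] by simp
qed

lemma H_eq_monomial_ideal: "(H S :: (_ \<Rightarrow>\<^sub>0 'k::field) set) = monomial_ideal (u_exp ` S)"
proof -
  have "(u_mon ` S :: (_ \<Rightarrow>\<^sub>0 'k) set) = (\<lambda>e. Poly_Mapping.single e 1) ` u_exp ` S"
    unfolding u_mon_def image_image ..
  then show ?thesis
    unfolding H_def by (simp only: ideal_gen_monomials)
qed

lemma H_Int_H_eq:
  fixes I J :: "'a::{finite,distrib_lattice} set"
  assumes "poset_ideal I" "I \<union> J = UNIV" "I \<inter> J = {}"
  shows "H I \<inter> H J
    = monomial_ideal {exp_lcm (u_exp p) (u_exp q) | p q. p \<in> J \<and> q \<in> I \<and> lower_nb q p}"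
  (is "_ = monomial_ideal ?G")
  unfolding H_eq_monomial_ideal monomial_ideal_Int
proof (rule antisym; rule monomial_ideal_subset)
  fix e assume "e \<in> {exp_lcm a b | a b. a \<in> u_exp ` I \<and> b \<in> u_exp ` J}"
  then obtain p0 q0 where "q0 \<in> I" "p0 \<in> J" and "e = exp_lcm (u_exp q0) (u_exp p0)"
    by blast
  then have e: "e = exp_lcm (u_exp p0) (u_exp q0)"
    by (simp add: exp_lcm_commute)
  have "p0 \<sqinter> q0 \<notin> J"
    using assms(1,3) \<open>q0 \<in> I\<close> inf_le2[of p0 q0] unfolding poset_ideal_def by blast
  then obtain p q where "p \<in> J" "q \<notin> J" "lower_nb q p" "p0 \<sqinter> q0 \<le> q" "p \<le> p0"
    using ex_lower_nb_across[of "p0 \<sqinter> q0" p0 J] \<open>p0 \<in> J\<close> by auto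
  have "ell q \<subseteq> ell p" "ell p \<subseteq> ell p0" "ell p0 \<inter> ell q0 \<subseteq> ell q"
    using ell_mono[OF less_imp_le[OF lower_nb_less[OF \<open>lower_nb q p\<close>]]]
      ell_mono[OF \<open>p \<le> p0\<close>] ell_mono[OF \<open>p0 \<sqinter> q0 \<le> q\<close>]
    by (simp_all add: ell_inf)
  then have "exp_dvd (exp_lcm (u_exp p) (u_exp q)) e"
    unfolding e by (intro exp_dvd_lcm_u_exp) auto
  moreover have "exp_lcm (u_exp p) (u_exp q) \<in> ?G"
    using \<open>p \<in> J\<close> \<open>q \<notin> J\<close> \<open>lower_nb q p\<close> assms(2) by blast
  ultimately show "\<exists>g\<in>?G. exp_dvd g e" by blast
next
  fix e assume "e \<in> ?G"
  then obtain p q where "p \<in> J" "q \<in> I" "e = exp_lcm (u_exp q) (u_exp p)"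
    using exp_lcm_commute by blast
  then show "\<exists>g\<in>{exp_lcm a b | a b. a \<in> u_exp ` I \<and> b \<in> u_exp ` J}. exp_dvd g e"
    using exp_dvd_refl by blast
qed

theorem lemma3p11:
  fixes I J :: "'a::{finite,distrib_lattice} set"
  assumes "poset_ideal I" and "poset_coideal J"
    and "I \<union> J = UNIV" and "I \<inter> J = {}"
  shows "(H I \<inter> H J :: ((('a + 'a) \<Rightarrow>\<^sub>0 nat) \<Rightarrow>\<^sub>0 'k::field) set)
           = ideal_gen {Poly_Mapping.single (exp_lcm (u_exp p) (u_exp q)) 1 | p q. p \<in> J \<and> q \<in> I \<and> lower_nb q p}
    \<and> (\<forall>e \<in> min_mon_gens (H I \<inter> H J :: ((('a + 'a) \<Rightarrow>\<^sub>0 nat) \<Rightarrow>\<^sub>0 'k::field) set).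
           mon_deg e = lat_rank TYPE('a) + 1)"
proof
  let ?G = "{exp_lcm (u_exp p) (u_exp q) | p q. p \<in> J \<and> q \<in> I \<and> lower_nb q p}"
  have HH: "(H I \<inter> H J :: (_ \<Rightarrow>\<^sub>0 'k) set) = monomial_ideal ?G"
    using H_Int_H_eq[OF assms(1,3,4)] .
  have "{Poly_Mapping.single (exp_lcm (u_exp p) (u_exp q)) (1::'k) | p q. p \<in> J \<and> q \<in> I \<and> lower_nb q p}
      = (\<lambda>e. Poly_Mapping.single e 1) ` ?G"
    by blast
  then show "(H I \<inter> H J :: (_ \<Rightarrow>\<^sub>0 'k) set)
      = ideal_gen {Poly_Mapping.single (exp_lcm (u_exp p) (u_exp q)) 1 | p q. p \<in> J \<and> q \<in> I \<and> lower_nb q p}"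
    by (simp add: HH ideal_gen_monomials)
  show "\<forall>e \<in> min_mon_gens (H I \<inter> H J :: (_ \<Rightarrow>\<^sub>0 'k) set). mon_deg e = lat_rank TYPE('a) + 1"
  proof
    fix e assume "e \<in> min_mon_gens (H I \<inter> H J :: (_ \<Rightarrow>\<^sub>0 'k) set)"
    then obtain p q where "lower_nb q p" "e = exp_lcm (u_exp p) (u_exp q)"
      using min_mon_gens_monomial_ideal unfolding HH by blast
    then show "mon_deg e = lat_rank TYPE('a) + 1"
      by (simp add: mon_deg_lcm_u_exp_lower_nb lat_rank_eq_card_join_irr)
  qed
qed

end
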